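(* Let $r\ge 2$ and $k\ge 3$ be integers. There is a constant $C=C(k,r)$ such that for every positive integer $n$ there exists a coloring of $[n]=\{1,2,\ldots,n\}$ with $r$ colors in which the number of monochromatic $k$-APs is at most $\frac{1}{2(k-1)r^{k-1}}n^2+Cn$.
   Context: A $k$-term arithmetic progression ($k$-AP) in $[n]$ is a sequence $a,a+d,a+2d,\ldots,a+(k-1)d$ of elements of $[n]$ with $d\ge 1$ an integer. It is monochromatic under a coloring if all $k$ of its terms receive the same color. *)

theory Defs
  imports Complex_Main
begin

definition kAPs :: "nat \<Rightarrow> nat \<Rightarrow> (nat \<times> nat) set" where
  "kAPs k n = {(a, d). 1 \<le> a \<and> 1 \<le> d \<and> (\<forall>i<k. a + i * d \<in> {1..n})}"

definition mono_AP :: "(nat \<Rightarrow> nat) \<Rightarrow> nat \<Rightarrow> nat \<times> nat \<Rightarrow> bool" where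
  "mono_AP c k ap = (\<forall>i<k. c (fst ap + i * snd ap) = c (fst ap))"

definition num_mono_kAPs :: "(nat \<Rightarrow> nat) \<Rightarrow> nat \<Rightarrow> nat \<Rightarrow> nat" where
  "num_mono_kAPs c k n = card {ap \<in> kAPs k n. mono_AP c k ap}"

end

theory Submission
  imports Defs "HOL-Library.FuncSet"
begin

(* Proof idea: colour [n] uniformly at random with r colours.  A fixed k-AP has k
   distinct terms, so it is monochromatic for exactly a fraction r^(1-k) of all
   r^n colourings.  By linearity of expectation (double counting over the finite
   set of colourings) the average number of monochromatic k-APs is
   |kAPs k n| / r^(k-1), so some colouring does at least as well as the average.
   Finally a k-AP in [n] is a pair (a,d) with a + (k-1) d <= n, and summing
   n - (k-1) d over d gives |kAPs k n| <= n^2 / (2 (k-1)).  Hence the theorem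
   holds even with C = 0. *)

definition colourings :: "nat \<Rightarrow> nat \<Rightarrow> (nat \<Rightarrow> nat) set" where
  "colourings n r = PiE {1..n} (\<lambda>_. {..<r})"

lemma finite_colourings: "finite (colourings n r)"
  by (simp add: colourings_def finite_PiE)

lemma card_colourings: "card (colourings n r) = r ^ n"
  by (simp add: colourings_def card_PiE)

text \<open>A function on S constant on T is determined by its values on
  S' = S - (T - {t0}); hence there are |R|^(|S| - |T| + 1) of them.\<close>
lemma card_PiE_constant_on:
  assumes S: "finite S" and T: "T \<subseteq> S" and t0: "t0 \<in> T"
  shows "card {c \<in> PiE S (\<lambda>_. R). \<forall>x\<in>T. c x = c t0} = card R ^ (card S - card T + 1)"
proof -
  define S' where "S' = S - (T - {t0})"
  have t0S': "t0 \<in> S'" and S'S: "S' \<subseteq> S" using t0 T by (auto simp: S'_def)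
  define extend where "extend h = (\<lambda>x. if x \<in> S then if x \<in> T then h t0 else h x else undefined)"
    for h :: "'a \<Rightarrow> 'b"
  have "bij_betw (\<lambda>c. restrict c S') {c \<in> PiE S (\<lambda>_. R). \<forall>x\<in>T. c x = c t0} (PiE S' (\<lambda>_. R))"
  proof (rule bij_betw_byWitness[where f' = extend])
    show "\<forall>c\<in>{c \<in> PiE S (\<lambda>_. R). \<forall>x\<in>T. c x = c t0}. extend (restrict c S') = c"
      using t0S' by (auto simp: extend_def S'_def PiE_def extensional_def fun_eq_iff)
    show "\<forall>h\<in>PiE S' (\<lambda>_. R). restrict (extend h) S' = h"
      using t0 T by (auto simp: extend_def S'_def PiE_def extensional_def fun_eq_iff)
    show "(\<lambda>c. restrict c S') ` {c \<in> PiE S (\<lambda>_. R). \<forall>x\<in>T. c x = c t0} \<subseteq> PiE S' (\<lambda>_. R)"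
      using S'S by (auto simp: PiE_iff)
    show "extend ` PiE S' (\<lambda>_. R) \<subseteq> {c \<in> PiE S (\<lambda>_. R). \<forall>x\<in>T. c x = c t0}"
      using t0 T by (auto simp: extend_def S'_def PiE_def extensional_def Pi_iff)
  qed
  then have "card {c \<in> PiE S (\<lambda>_. R). \<forall>x\<in>T. c x = c t0} = card R ^ card S'"
    using S S'S by (simp add: bij_betw_same_card card_PiE finite_subset)
  moreover have "card S' = card S - card T + 1"
  proof -
    have fT: "finite T" using T S finite_subset by blast
    have "card T \<le> card S" "card T \<ge> 1"
      using T S t0 fT card_mono by (auto simp: Suc_le_eq card_gt_0_iff)
    moreover have "card S' = card S - (card T - 1)"
      unfolding S'_def using T t0 fT by (subst card_Diff_subset) (auto simp: card_Diff_singleton)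
    ultimately show ?thesis by simp
  qed
  ultimately show ?thesis by simp
qed

lemma kAPs_memE:
  assumes "(a, d) \<in> kAPs k n"
  shows "1 \<le> a" "1 \<le> d" "\<And>i. i < k \<Longrightarrow> a + i * d \<in> {1..n}"
  using assms by (auto simp: kAPs_def)

text \<open>A k-AP is monochromatic for exactly r^n / r^(k-1) colourings, because its
  k terms are distinct elements of [n].\<close>
lemma card_mono_colourings_of_AP:
  assumes ap: "ap \<in> kAPs k n" and k: "k \<ge> 1"
  shows "card {c \<in> colourings n r. mono_AP c k ap} * r ^ (k - 1) = r ^ n"
proof -
  obtain a d where ap_eq: "ap = (a, d)" by fastforce
  note mem = kAPs_memE[OF ap[unfolded ap_eq]]
  define T where "T = (\<lambda>i. a + i * d) ` {..<k}"
  have "inj_on (\<lambda>i. a + i * d) {..<k}" using mem(2) by (auto simp: inj_on_def)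
  then have card_T: "card T = k" by (simp add: T_def card_image)
  have T_sub: "T \<subseteq> {1..n}" using mem(3) by (auto simp: T_def)
  have a_T: "a \<in> T" using k by (auto simp: T_def intro!: image_eqI[where x=0])
  have k_le_n: "k \<le> n" using card_mono[OF _ T_sub] card_T by simp
  have "{c \<in> colourings n r. mono_AP c k ap} = {c \<in> PiE {1..n} (\<lambda>_. {..<r}). \<forall>x\<in>T. c x = c a}"
    by (auto simp: colourings_def mono_AP_def ap_eq T_def)
  then have "card {c \<in> colourings n r. mono_AP c k ap} = r ^ (n - k + 1)"
    using card_PiE_constant_on[OF _ T_sub a_T, of "{..<r}"] card_T k_le_n by simp
  moreover have "n - k + 1 + (k - 1) = n" using k k_le_n by simp
  ultimately show ?thesis by (metis power_add)
qed

lemma kAPs_embedding: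
  assumes k: "k \<ge> 2"
  shows "(\<lambda>(a, d). (d, a)) ` kAPs k n \<subseteq> Sigma {1..n div (k - 1)} (\<lambda>d. {1..n - (k - 1) * d})"
proof clarify
  fix a d assume "(a, d) \<in> kAPs k n"
  note mem = kAPs_memE[OF this]
  have last: "a + (k - 1) * d \<le> n" using mem(3)[of "k - 1"] k by (simp add: mult.commute)
  then have "(k - 1) * d \<le> n" by linarith
  then have "d \<le> n div (k - 1)"
    using k by (simp add: less_eq_div_iff_mult_less_eq mult.commute)
  then show "d \<in> {1..n div (k - 1)} \<and> a \<in> {1..n - (k - 1) * d}" using mem last by auto
qed

text \<open>For k \<ge> 2 there are finitely many k-APs (for k \<le> 1 the difference is unbounded).\<close>
lemma finite_kAPs:
  assumes "k \<ge> 2"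
  shows "finite (kAPs k n)"
proof -
  have "inj_on (\<lambda>(a::nat, d::nat). (d, a)) (kAPs k n)" by (auto simp: inj_on_def)
  moreover have "finite ((\<lambda>(a, d). (d, a)) ` kAPs k n)"
    using kAPs_embedding[OF assms] by (rule finite_subset) simp
  ultimately show ?thesis using finite_image_iff by blast
qed

text \<open>The closed form 2m \<Sum>(n - m d) = n^2 - (n - mD)^2 - m^2 D, for m D \<le> n.\<close>
lemma sum_gaps_bound:
  fixes m n D :: nat
  assumes "m * D \<le> n"
  shows "2 * m * (\<Sum>d\<in>{1..D}. n - m * d) \<le> n ^ 2"
proof -
  have closed_form: "2 * int m * (\<Sum>d\<in>{1..D}. int n - int m * int d)
      = 2 * int m * int n * int D - int m ^ 2 * int D * (int D + 1)" for D
    by (induction D) (simp_all add: algebra_simps power2_eq_square)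
  have "(\<Sum>d\<in>{1..D}. int (n - m * d)) = (\<Sum>d\<in>{1..D}. int n - int m * int d)"
  proof (rule sum.cong)
    fix d assume "d \<in> {1..D}"
    then have "m * d \<le> n" using assms by (meson atLeastAtMost_iff le_trans mult_le_mono2)
    then show "int (n - m * d) = int n - int m * int d" by (simp add: of_nat_diff)
  qed simp
  then have "int (2 * m * (\<Sum>d\<in>{1..D}. n - m * d))
      = int n ^ 2 - (int n - int m * int D) ^ 2 - int m ^ 2 * int D"
    using closed_form[of D] by (simp add: of_nat_sum algebra_simps power2_eq_square)
  also have "\<dots> \<le> int n ^ 2"
  proof -
    have "0 \<le> (int n - int m * int D) ^ 2" "0 \<le> int m ^ 2 * int D" by simp_all
    then show ?thesis by linarith
  qed
  finally show ?thesis by (metis of_nat_le_iff of_nat_power)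
qed

lemma card_kAPs_bound:
  assumes k: "k \<ge> 2"
  shows "2 * (k - 1) * card (kAPs k n) \<le> n ^ 2"
proof -
  let ?m = "k - 1" and ?D = "n div (k - 1)"
  have "inj_on (\<lambda>(a::nat, d::nat). (d, a)) (kAPs k n)" by (auto simp: inj_on_def)
  then have "card (kAPs k n) = card ((\<lambda>(a, d). (d, a)) ` kAPs k n)"
    by (simp add: card_image)
  also have "\<dots> \<le> card (Sigma {1..?D} (\<lambda>d. {1..n - ?m * d}))"
    by (rule card_mono[OF _ kAPs_embedding[OF k]]) simp
  also have "\<dots> = (\<Sum>d\<in>{1..?D}. n - ?m * d)" by simp
  finally have "2 * ?m * card (kAPs k n) \<le> 2 * ?m * (\<Sum>d\<in>{1..?D}. n - ?m * d)" by simp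
  also have "\<dots> \<le> n ^ 2" by (rule sum_gaps_bound) simp
  finally show ?thesis .
qed

lemma sum_num_mono_kAPs:
  assumes k: "k \<ge> 2"
  shows "(\<Sum>c\<in>colourings n r. num_mono_kAPs c k n) * r ^ (k - 1) = card (kAPs k n) * r ^ n"
proof -
  have "(\<Sum>c\<in>colourings n r. num_mono_kAPs c k n)
      = (\<Sum>c\<in>colourings n r. \<Sum>ap\<in>kAPs k n. if mono_AP c k ap then 1 else 0)"
    unfolding num_mono_kAPs_def using finite_kAPs[OF k] by (simp add: sum.inter_filter[symmetric])
  also have "\<dots> = (\<Sum>ap\<in>kAPs k n. card {c \<in> colourings n r. mono_AP c k ap})"
    by (subst sum.swap) (simp add: sum.inter_filter[symmetric] finite_colourings)
  finally show ?thesis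
    using card_mono_colourings_of_AP k by (simp add: sum_distrib_right)
qed

lemma exists_le_average:
  fixes f :: "'a \<Rightarrow> 'b :: linordered_semidom"
  assumes "finite F" "F \<noteq> {}"
  shows "\<exists>x\<in>F. of_nat (card F) * f x \<le> sum f F"
proof (rule ccontr)
  assume "\<not> ?thesis"
  then have "(\<Sum>x\<in>F. sum f F) < (\<Sum>x\<in>F. of_nat (card F) * f x)"
    using assms by (intro sum_strict_mono) (auto simp: not_le)
  then show False by (simp add: sum_distrib_left)
qed

lemma good_colouring_exists:
  assumes k: "k \<ge> 2" and r: "r \<ge> 1"
  shows "\<exists>c\<in>colourings n r. num_mono_kAPs c k n * r ^ (k - 1) \<le> card (kAPs k n)"
proof -
  have nonempty: "colourings n r \<noteq> {}"
    using r card_colourings[of n r] card.empty by (metis one_le_power not_one_le_zero)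
  then obtain c where c: "c \<in> colourings n r"
    and avg: "card (colourings n r) * num_mono_kAPs c k n \<le> (\<Sum>c\<in>colourings n r. num_mono_kAPs c k n)"
    using exists_le_average[OF finite_colourings nonempty, of "\<lambda>c. num_mono_kAPs c k n"] by auto
  have "r ^ n * (num_mono_kAPs c k n * r ^ (k - 1))
      = (card (colourings n r) * num_mono_kAPs c k n) * r ^ (k - 1)"
    by (simp add: card_colourings)
  also have "\<dots> \<le> (\<Sum>c\<in>colourings n r. num_mono_kAPs c k n) * r ^ (k - 1)"
    using avg by (rule mult_right_mono) simp
  also have "\<dots> = r ^ n * card (kAPs k n)"
    using sum_num_mono_kAPs[OF k] by simp
  finally show ?thesis using c r by auto
qed

theorem mainTheorem1:
  fixes r k :: nat
  assumes "r \<ge> 2" and "k \<ge> 3"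
  shows "\<exists>C::real. \<forall>n::nat. n \<ge> 1 \<longrightarrow>
           (\<exists>c :: nat \<Rightarrow> nat. c ` {1..n} \<subseteq> {..<r} \<and>
              real (num_mono_kAPs c k n)
                \<le> real n ^ 2 / (2 * (real k - 1) * real r ^ (k - 1)) + C * real n)"
proof (intro exI[of _ 0] allI impI)
  fix n :: nat
  obtain c where c: "c \<in> colourings n r"
    and good: "num_mono_kAPs c k n * r ^ (k - 1) \<le> card (kAPs k n)"
    using good_colouring_exists[of k r n] assms by auto
  have "2 * (k - 1) * r ^ (k - 1) * num_mono_kAPs c k n
      = 2 * (k - 1) * (num_mono_kAPs c k n * r ^ (k - 1))" by simp
  also have "\<dots> \<le> 2 * (k - 1) * card (kAPs k n)" using good by simp
  also have "\<dots> \<le> n ^ 2" using card_kAPs_bound assms by simp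
  finally have "2 * (k - 1) * r ^ (k - 1) * num_mono_kAPs c k n \<le> n ^ 2" .
  then have "real (2 * (k - 1) * r ^ (k - 1) * num_mono_kAPs c k n) \<le> real (n ^ 2)"
    by (simp only: of_nat_le_iff)
  then have "2 * (real k - 1) * real r ^ (k - 1) * real (num_mono_kAPs c k n) \<le> real n ^ 2"
    using assms by (simp add: of_nat_diff)
  then have "real (num_mono_kAPs c k n) \<le> real n ^ 2 / (2 * (real k - 1) * real r ^ (k - 1))"
    using assms by (simp add: pos_le_divide_eq mult.commute)
  moreover have "c ` {1..n} \<subseteq> {..<r}" using c by (auto simp: colourings_def)
  ultimately show "\<exists>c. c ` {1..n} \<subseteq> {..<r} \<and> real (num_mono_kAPs c k n)
      \<le> real n ^ 2 / (2 * (real k - 1) * real r ^ (k - 1)) + 0 * real n" by auto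
qed

end
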